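(* Let $G$ be a simple undirected graph with exactly three leaves. (1) If $G$ admits a taming net, then $G$ has no sapling. (2) If an $X$-net $\mathbb{H}$ of $G$ has no parallel arcs, then every $\mathbb{H}$-tamed subset of $X$ is $\mathbb{H}$-local.
   Context: A sapling of $G$ is an induced tree of $G$ containing all three leaves of $G$. For $U,V\subseteq V(G)$, a $UV$-path is a single vertex of $U\cap V$ or a path with one end in $U$ and the other in $V$; a $UV$-rung is a vertex-minimal induced $UV$-path. $\nabla(\mathbb{H})$ adds an edge between every two leaves of $\mathbb{H}$. An $X$-net ($X\subseteq V(G)$) is a finite loopless multigraph $\mathbb{H}$ whose nodes and arcs are subsets of $X$ such that: (N1) $\mathbb{H}$ is connected and $\nabla(\mathbb{H})$ biconnected; (N2) the arcs are nonempty, pairwise disjoint, and partition $X$; (N3) $\mathbb{H}$ has exactly three leaf nodes, each a single leaf vertex of $G$; (N4) for each arc $E$ with end-nodes $U,V$, each vertex of $E$ lies on a $UV$-rung of $G[E]$; (N5) for arc $E$ and node $V$, $E\cap V\ne\emptyset$ iff $V$ is an end-node of $E$; (N6) for $u,v\in X$ in distinct arcs $E,F$, $uv\in E(G)$ iff $E,F$ share an end-node $V$ with $\{u,v\}\subseteq V$. A net is an $X$-net for some $X$. For an $X$-net $\mathbb{H}$: $S\subseteq X$ is $\mathbb{H}$-tamed if every two vertices of $S$ lie in a common arc or a common node; $Y\subseteq V(G)\setminus X$ is $\mathbb{H}$-tamed if the set of vertices of $X$ adjacent to $Y$ is $\mathbb{H}$-tamed; $\mathbb{H}$ is taming if every $Y\subseteq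 V(G)\setminus X$ with $G[Y]$ connected is $\mathbb{H}$-tamed. A triad is $(V_1\cap V_2)\cup(V_2\cap V_3)\cup(V_3\cap V_1)$ for nodes $V_1,V_2,V_3$ forming a triangle in $\mathbb{H}$; $S\subseteq X$ is $\mathbb{H}$-local if $S$ is contained in a node, an arc, or a triad of $\mathbb{H}$. *)

theory Defs
  imports Main
begin

definition simple_graph :: "'a set \<Rightarrow> ('a \<Rightarrow> 'a \<Rightarrow> bool) \<Rightarrow> bool" where
  "simple_graph VG adj \<longleftrightarrow> finite VG \<and>
     (\<forall>u v. adj u v \<longrightarrow> u \<in> VG \<and> v \<in> VG) \<and>
     (\<forall>u v. adj u v \<longrightarrow> adj v u) \<and> (\<forall>v. \<not> adj v v)"

definition degree :: "'a set \<Rightarrow> ('a \<Rightarrow> 'a \<Rightarrow> bool) \<Rightarrow> 'a \<Rightarrow> nat" where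
  "degree VG adj v = card {u \<in> VG. adj v u}"

definition leaves :: "'a set \<Rightarrow> ('a \<Rightarrow> 'a \<Rightarrow> bool) \<Rightarrow> 'a set" where
  "leaves VG adj = {v \<in> VG. degree VG adj v = 1}"

definition connected_on :: "('b \<Rightarrow> 'b \<Rightarrow> bool) \<Rightarrow> 'b set \<Rightarrow> bool" where
  "connected_on R S \<longleftrightarrow>
     (\<forall>u\<in>S. \<forall>v\<in>S. (u, v) \<in> {(x, y). x \<in> S \<and> y \<in> S \<and> R x y}\<^sup>*)"

definition is_path :: "'a set \<Rightarrow> ('a \<Rightarrow> 'a \<Rightarrow> bool) \<Rightarrow> 'a list \<Rightarrow> bool" where
  "is_path VG adj P \<longleftrightarrow> P \<noteq> [] \<and> distinct P \<and> set P \<subseteq> VG \<and>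
     (\<forall>i. Suc i < length P \<longrightarrow> adj (P ! i) (P ! Suc i))"

definition induced_path :: "'a set \<Rightarrow> ('a \<Rightarrow> 'a \<Rightarrow> bool) \<Rightarrow> 'a list \<Rightarrow> bool" where
  "induced_path VG adj P \<longleftrightarrow> is_path VG adj P \<and>
     (\<forall>i j. i < length P \<longrightarrow> j < length P \<longrightarrow> Suc i < j \<longrightarrow> \<not> adj (P ! i) (P ! j))"

definition is_cycle :: "'a set \<Rightarrow> ('a \<Rightarrow> 'a \<Rightarrow> bool) \<Rightarrow> 'a list \<Rightarrow> bool" where
  "is_cycle VG adj C \<longleftrightarrow> is_path VG adj C \<and> length C \<ge> 3 \<and> adj (last C) (hd C)"

definition induced_tree :: "'a set \<Rightarrow> ('a \<Rightarrow> 'a \<Rightarrow> bool) \<Rightarrow> 'a set \<Rightarrow> bool" where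
  "induced_tree VG adj T \<longleftrightarrow> T \<subseteq> VG \<and> T \<noteq> {} \<and> connected_on adj T \<and>
     \<not> (\<exists>C. set C \<subseteq> T \<and> is_cycle VG adj C)"

definition sapling :: "'a set \<Rightarrow> ('a \<Rightarrow> 'a \<Rightarrow> bool) \<Rightarrow> 'a set \<Rightarrow> bool" where
  "sapling VG adj T \<longleftrightarrow> induced_tree VG adj T \<and> leaves VG adj \<subseteq> T"

text \<open>A UV-path of G[W]: a single vertex of U \<inter> V, or a path with one end in U, the other in V,
  all of whose vertices lie in W.\<close>

definition UV_path :: "'a set \<Rightarrow> ('a \<Rightarrow> 'a \<Rightarrow> bool) \<Rightarrow> 'a set \<Rightarrow> 'a set \<Rightarrow> 'a set \<Rightarrow> 'a list \<Rightarrow> bool" where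
  "UV_path VG adj W U V P \<longleftrightarrow> is_path VG adj P \<and> set P \<subseteq> W \<and>
     ((hd P \<in> U \<and> last P \<in> V) \<or> (hd P \<in> V \<and> last P \<in> U))"

definition UV_rung :: "'a set \<Rightarrow> ('a \<Rightarrow> 'a \<Rightarrow> bool) \<Rightarrow> 'a set \<Rightarrow> 'a set \<Rightarrow> 'a set \<Rightarrow> 'a list \<Rightarrow> bool" where
  "UV_rung VG adj W U V P \<longleftrightarrow> UV_path VG adj W U V P \<and> induced_path VG adj P \<and>
     \<not> (\<exists>Q. UV_path VG adj W U V Q \<and> set Q \<subset> set P)"

text \<open>A multigraph \<open>\<bbbH>\<close> is given by a set of nodes N, a set of arcs A (both sets of vertex sets
  of G) and an end-node map ends assigning to each arc the set of its end-nodes (two distinct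
  nodes, as the multigraph is loopless).\<close>

definition node_adj :: "'a set set \<Rightarrow> ('a set \<Rightarrow> 'a set set) \<Rightarrow> 'a set \<Rightarrow> 'a set \<Rightarrow> bool" where
  "node_adj A ends U V \<longleftrightarrow> U \<noteq> V \<and> (\<exists>E\<in>A. ends E = {U, V})"

definition node_degree :: "'a set set \<Rightarrow> ('a set \<Rightarrow> 'a set set) \<Rightarrow> 'a set \<Rightarrow> nat" where
  "node_degree A ends V = card {E \<in> A. V \<in> ends E}"

definition leaf_nodes :: "'a set set \<Rightarrow> 'a set set \<Rightarrow> ('a set \<Rightarrow> 'a set set) \<Rightarrow> 'a set set" where
  "leaf_nodes N A ends = {V \<in> N. node_degree A ends V = 1}"

definition nabla_adj :: "'a set set \<Rightarrow> 'a set set \<Rightarrow> ('a set \<Rightarrow> 'a set set) \<Rightarrow> 'a set \<Rightarrow> 'a set \<Rightarrow> bool" where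
  "nabla_adj N A ends U V \<longleftrightarrow> node_adj A ends U V \<or>
     (U \<noteq> V \<and> U \<in> leaf_nodes N A ends \<and> V \<in> leaf_nodes N A ends)"

definition biconnected_on :: "('b \<Rightarrow> 'b \<Rightarrow> bool) \<Rightarrow> 'b set \<Rightarrow> bool" where
  "biconnected_on R S \<longleftrightarrow> card S \<ge> 3 \<and> connected_on R S \<and>
     (\<forall>v\<in>S. connected_on R (S - {v}))"

definition is_net :: "'a set \<Rightarrow> ('a \<Rightarrow> 'a \<Rightarrow> bool) \<Rightarrow> 'a set \<Rightarrow> 'a set set \<Rightarrow> 'a set set
                       \<Rightarrow> ('a set \<Rightarrow> 'a set set) \<Rightarrow> bool" where
  "is_net VG adj X N A ends \<longleftrightarrow>
     X \<subseteq> VG \<and> finite N \<and> finite A \<and>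
     (\<forall>V\<in>N. V \<subseteq> X) \<and> (\<forall>E\<in>A. E \<subseteq> X) \<and>
     (\<forall>E\<in>A. ends E \<subseteq> N \<and> card (ends E) = 2) \<and>
     \<comment> \<open>(N1)\<close>
     connected_on (node_adj A ends) N \<and> biconnected_on (nabla_adj N A ends) N \<and>
     \<comment> \<open>(N2)\<close>
     (\<forall>E\<in>A. E \<noteq> {}) \<and> (\<forall>E\<in>A. \<forall>F\<in>A. E \<noteq> F \<longrightarrow> E \<inter> F = {}) \<and> \<Union>A = X \<and>
     \<comment> \<open>(N3)\<close>
     card (leaf_nodes N A ends) = 3 \<and>
     (\<forall>V\<in>leaf_nodes N A ends. \<exists>l\<in>leaves VG adj. V = {l}) \<and>
     \<comment> \<open>(N4)\<close>
     (\<forall>E\<in>A. \<forall>U V. ends E = {U, V} \<longrightarrow>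
        (\<forall>x\<in>E. \<exists>P. UV_rung VG adj E U V P \<and> x \<in> set P)) \<and>
     \<comment> \<open>(N5)\<close>
     (\<forall>E\<in>A. \<forall>V\<in>N. E \<inter> V \<noteq> {} \<longleftrightarrow> V \<in> ends E) \<and>
     \<comment> \<open>(N6)\<close>
     (\<forall>E\<in>A. \<forall>F\<in>A. E \<noteq> F \<longrightarrow> (\<forall>u\<in>E. \<forall>v\<in>F.
        adj u v \<longleftrightarrow> (\<exists>V\<in>N. V \<in> ends E \<and> V \<in> ends F \<and> u \<in> V \<and> v \<in> V)))"

definition no_parallel_arcs :: "'a set set \<Rightarrow> ('a set \<Rightarrow> 'a set set) \<Rightarrow> bool" where
  "no_parallel_arcs A ends \<longleftrightarrow> (\<forall>E\<in>A. \<forall>F\<in>A. E \<noteq> F \<longrightarrow> ends E \<noteq> ends F)"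

definition tamed_set :: "'a set set \<Rightarrow> 'a set set \<Rightarrow> 'a set \<Rightarrow> bool" where
  "tamed_set N A S \<longleftrightarrow>
     (\<forall>u\<in>S. \<forall>v\<in>S. (\<exists>E\<in>A. u \<in> E \<and> v \<in> E) \<or> (\<exists>V\<in>N. u \<in> V \<and> v \<in> V))"

definition tamed_outside :: "('a \<Rightarrow> 'a \<Rightarrow> bool) \<Rightarrow> 'a set \<Rightarrow> 'a set set \<Rightarrow> 'a set set \<Rightarrow> 'a set \<Rightarrow> bool" where
  "tamed_outside adj X N A Y \<longleftrightarrow> tamed_set N A {x \<in> X. \<exists>y\<in>Y. adj x y}"

definition taming :: "'a set \<Rightarrow> ('a \<Rightarrow> 'a \<Rightarrow> bool) \<Rightarrow> 'a set \<Rightarrow> 'a set set \<Rightarrow> 'a set set \<Rightarrow> bool" where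
  "taming VG adj X N A \<longleftrightarrow>
     (\<forall>Y. Y \<subseteq> VG - X \<longrightarrow> connected_on adj Y \<longrightarrow> tamed_outside adj X N A Y)"

definition triad :: "'a set set \<Rightarrow> 'a set set \<Rightarrow> ('a set \<Rightarrow> 'a set set) \<Rightarrow> 'a set \<Rightarrow> bool" where
  "triad N A ends T \<longleftrightarrow> (\<exists>V1\<in>N. \<exists>V2\<in>N. \<exists>V3\<in>N.
     node_adj A ends V1 V2 \<and> node_adj A ends V2 V3 \<and> node_adj A ends V3 V1 \<and>
     T = (V1 \<inter> V2) \<union> (V2 \<inter> V3) \<union> (V3 \<inter> V1))"

definition local_set :: "'a set set \<Rightarrow> 'a set set \<Rightarrow> ('a set \<Rightarrow> 'a set set) \<Rightarrow> 'a set \<Rightarrow> bool" where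
  "local_set N A ends S \<longleftrightarrow> (\<exists>V\<in>N. S \<subseteq> V) \<or> (\<exists>E\<in>A. S \<subseteq> E) \<or>
     (\<exists>T. triad N A ends T \<and> S \<subseteq> T)"

end

theory Submission
  imports Defs
begin

(*
  (1) Call two distinct arcs linked by a sapling T if T has a vertex of each in a common node.
  By (N6), vertices of three distinct arcs lying in one node are pairwise adjacent, a triangle
  in the tree T; so every arc is linked through each of its two ends to at most one arc, and a
  leaf arc, whose leaf end contains nothing but the leaf, to at most one arc altogether.
  Taming says that wherever a walk in T leaves X, the vertices where it leaves and re-enters X
  share an arc or a node; hence along a walk in T one passes from arc to arc by links only, and
  the three leaf arcs lie in one component of the linking graph. A graph of maximum degree two
  has no component containing three vertices of degree at most one.

  (2) Without parallel arcs, two arcs share at most one end, and a tamed set meeting two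
  distinct arcs meets them only inside that common end. So a tamed set S lying in no arc and
  no node meets three arcs whose ends form a triangle U V W of nodes; any further arc meeting S
  would have to be parallel to a side, and S lies in the triad of U, V, W.
*)

lemma rtrancl_imp_distinct_walk:
  assumes "(x, y) \<in> r\<^sup>*"
  obtains p where "p \<noteq> []" "hd p = x" "last p = y" "distinct p"
    "\<And>i. Suc i < length p \<Longrightarrow> (p ! i, p ! Suc i) \<in> r"
proof -
  have "\<exists>p. p \<noteq> [] \<and> hd p = x \<and> last p = y \<and> distinct p \<and>
      (\<forall>i. Suc i < length p \<longrightarrow> (p ! i, p ! Suc i) \<in> r)"
    using assms
  proof (induction rule: rtrancl_induct)
    case base
    show ?case by (intro exI[of _ "[x]"]) auto
  next
    case (step y z)
    then obtain p where p: "p \<noteq> []" "hd p = x" "last p = y" "distinct p"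
      "\<forall>i. Suc i < length p \<longrightarrow> (p ! i, p ! Suc i) \<in> r" by blast
    show ?case
    proof (cases "z \<in> set p")
      case True
      then obtain k where k: "k < length p" "p ! k = z" by (auto simp: in_set_conv_nth)
      have "last (take (Suc k) p) = z" using k by (simp add: take_Suc_conv_app_nth)
      then show ?thesis
        using p k by (intro exI[of _ "take (Suc k) p"]) auto
    next
      case False
      have "((p @ [z]) ! i, (p @ [z]) ! Suc i) \<in> r" if "Suc i < length (p @ [z])" for i
      proof (cases "Suc i < length p")
        case True
        then show ?thesis using p(5) by (simp add: nth_append)
      next
        case False
        then have "i = length p - 1" "Suc i = length p" using that by auto
        then show ?thesis using p(1,3) step(2) by (simp add: nth_append last_conv_nth)
      qed
      then show ?thesis
        using p False by (intro exI[of _ "p @ [z]"]) auto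
    qed
  qed
  then show ?thesis using that by blast
qed

lemma distinct_walk_inner_neighbours:
  assumes sym: "\<And>u v. R u v \<Longrightarrow> R v u"
    and walk: "\<And>i. Suc i < length p \<Longrightarrow> R (p ! i) (p ! Suc i)" and "distinct p"
    and "0 < i" "Suc i < length p"
  shows "R (p ! i) (p ! (i - 1)) \<and> R (p ! i) (p ! Suc i) \<and> p ! (i - 1) \<noteq> p ! Suc i"
  using assms sym walk[of "i - 1"] walk[of i] by (simp add: nth_eq_iff_index_eq)

lemma max_degree_two_walk_closed:
  fixes R :: "'b \<Rightarrow> 'b \<Rightarrow> bool"
  assumes sym: "\<And>u v. R u v \<Longrightarrow> R v u"
    and degree_le_2: "\<And>v a b c. R v a \<Longrightarrow> R v b \<Longrightarrow> R v c \<Longrightarrow> a = b \<or> b = c \<or> a = c"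
    and pendant: "\<And>x a b. x \<in> {hd p, last p} \<Longrightarrow> R x a \<Longrightarrow> R x b \<Longrightarrow> a = b"
    and walk: "\<And>i. Suc i < length p \<Longrightarrow> R (p ! i) (p ! Suc i)" and "distinct p"
    and n: "2 \<le> length p"
    and v: "v \<in> set p" and vw: "R v w"
  shows "w \<in> set p"
proof -
  obtain i where i: "i < length p" "p ! i = v" using v by (auto simp: in_set_conv_nth)
  have "p \<noteq> []" using n by auto
  then have first: "hd p = p ! 0" and last: "last p = p ! (length p - 1)"
    by (simp_all add: hd_conv_nth last_conv_nth)
  consider "i = 0" | "i = length p - 1" | "0 < i" "Suc i < length p" using i by linarith
  then show ?thesis
  proof cases
    case 1
    then have "w = p ! 1" using pendant[of "hd p" w "p ! 1"] walk[of 0] n first i vw by auto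
    then show ?thesis using n by simp
  next
    case 2
    have "R (last p) (p ! (length p - 2))"
      using sym walk[of "length p - 2"] n last by (simp add: numeral_2_eq_2 Suc_diff_Suc)
    then have "w = p ! (length p - 2)" using pendant[of "last p" w] 2 last i vw by auto
    then show ?thesis using n by simp
  next
    case 3
    have "R (p ! i) w" using vw i by simp
    moreover note distinct_walk_inner_neighbours[of R p i, OF sym walk \<open>distinct p\<close> 3]
    ultimately have "w = p ! (i - 1) \<or> w = p ! Suc i" using degree_le_2 by blast
    then show ?thesis using 3 by auto
  qed
qed

lemma max_degree_two_no_three_pendants:
  fixes R :: "'b \<Rightarrow> 'b \<Rightarrow> bool"
  assumes sym: "\<And>u v. R u v \<Longrightarrow> R v u"
    and degree_le_2: "\<And>v a b c. R v a \<Longrightarrow> R v b \<Longrightarrow> R v c \<Longrightarrow> a = b \<or> b = c \<or> a = c"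
    and pendant: "\<And>x a b. x \<in> {x1, x2, x3} \<Longrightarrow> R x a \<Longrightarrow> R x b \<Longrightarrow> a = b"
    and distinct: "x1 \<noteq> x2" "x1 \<noteq> x3" "x2 \<noteq> x3"
    and reach: "(x1, x2) \<in> {(a, b). R a b}\<^sup>*" "(x1, x3) \<in> {(a, b). R a b}\<^sup>*"
  shows False
proof -
  obtain p where p: "p \<noteq> []" "hd p = x1" "last p = x2" "distinct p"
    and walk: "\<And>i. Suc i < length p \<Longrightarrow> R (p ! i) (p ! Suc i)"
    using rtrancl_imp_distinct_walk[OF reach(1)] by auto
  have first: "p ! 0 = x1" and last: "p ! (length p - 1) = x2"
    using p by (simp_all add: hd_conv_nth last_conv_nth)
  have "length p \<noteq> 0" "length p \<noteq> 1" using p(1) first last distinct by auto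
  then have n: "2 \<le> length p" by linarith
  have pendant_ends: "a = b" if "x \<in> {hd p, last p}" "R x a" "R x b" for x a b
    using pendant[of x a b] that p(2,3) by blast
  \<comment> \<open>the walk is a whole component: no edge leaves it\<close>
  have "y \<in> set p" if "(x1, y) \<in> {(a, b). R a b}\<^sup>*" for y
    using that
  proof (induction rule: rtrancl_induct)
    case base
    show ?case using p(1,2) hd_in_set by blast
  next
    case (step y z)
    show ?case
      by (rule max_degree_two_walk_closed[of R p y z])
        (fact sym degree_le_2 pendant_ends walk p(4) n step.IH | use step.hyps in simp)+
  qed
  from this[OF reach(2)] obtain i where i: "i < length p" "p ! i = x3"
    by (auto simp: in_set_conv_nth)
  have "i \<noteq> 0" "i \<noteq> length p - 1" using i(2) first last distinct by metis+
  then have "0 < i" "Suc i < length p" using i by linarith+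
  then have "R x3 (p ! (i - 1)) \<and> R x3 (p ! Suc i) \<and> p ! (i - 1) \<noteq> p ! Suc i"
    using distinct_walk_inner_neighbours[of R p i, OF sym walk p(4)] i(2) by simp
  then show False using pendant[of x3 "p ! (i - 1)" "p ! Suc i"] by simp
qed

lemma card_two_meets_triangle:
  assumes "card S = 2" "a \<noteq> b" "b \<noteq> c" "a \<noteq> c"
    and "S \<inter> {a, b} \<noteq> {}" "S \<inter> {b, c} \<noteq> {}" "S \<inter> {a, c} \<noteq> {}"
  shows "S = {a, b} \<or> S = {b, c} \<or> S = {a, c}"
  using assms by (auto simp: card_2_iff)

lemma card_two_pigeonhole:
  "card S = 2 \<Longrightarrow> a \<in> S \<Longrightarrow> b \<in> S \<Longrightarrow> c \<in> S \<Longrightarrow> a = b \<or> b = c \<or> a = c"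
  by (auto simp: card_2_iff)

lemma card_two_eq_pair: "card S = 2 \<Longrightarrow> a \<in> S \<Longrightarrow> b \<in> S \<Longrightarrow> a \<noteq> b \<Longrightarrow> S = {a, b}"
  by (auto simp: card_2_iff)

lemma induced_tree_no_triangle:
  assumes "induced_tree VG adj T" "a \<in> T" "b \<in> T" "c \<in> T"
    and "adj a b" "adj b c" "adj c a" "a \<noteq> b" "b \<noteq> c" "a \<noteq> c"
  shows False
proof -
  have "is_cycle VG adj [a, b, c]"
    using assms by (auto simp: is_cycle_def is_path_def induced_tree_def less_Suc_eq nth_Cons')
  then show False using assms unfolding induced_tree_def by auto
qed

lemma tamed_set_subset: "tamed_set N A S \<Longrightarrow> S' \<subseteq> S \<Longrightarrow> tamed_set N A S'"
  unfolding tamed_set_def by (meson subsetD)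

lemma connected_on_insert:
  assumes "connected_on R Y" "s \<in> Y" "R s z" "R z s"
  shows "connected_on R (insert z Y)"
proof -
  let ?E = "\<lambda>S. {(x, y). x \<in> S \<and> y \<in> S \<and> R x y}"
  have "?E Y \<subseteq> ?E (insert z Y)" by blast
  then have in_Y: "(u, v) \<in> (?E (insert z Y))\<^sup>*" if "u \<in> Y" "v \<in> Y" for u v
    using assms(1) that rtrancl_mono unfolding connected_on_def by blast
  have "(u, s) \<in> (?E (insert z Y))\<^sup>* \<and> (s, u) \<in> (?E (insert z Y))\<^sup>*" if "u \<in> insert z Y" for u
  proof (cases "u = z")
    case True
    have "(s, z) \<in> ?E (insert z Y)" "(z, s) \<in> ?E (insert z Y)" using assms(2-4) by auto
    then show ?thesis using True by blast
  next
    case False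
    then show ?thesis using that in_Y assms(2) by blast
  qed
  then show ?thesis unfolding connected_on_def by (meson rtrancl_trans)
qed

locale graph_net =
  fixes VG :: "'a set" and adj :: "'a \<Rightarrow> 'a \<Rightarrow> bool"
    and X :: "'a set" and N A :: "'a set set" and ends :: "'a set \<Rightarrow> 'a set set"
  assumes is_net: "is_net VG adj X N A ends"
begin

lemma nodes_subset_X: "\<forall>V\<in>N. V \<subseteq> X"
  using is_net unfolding is_net_def by (elim conjE) assumption

lemma arc_ends: "\<forall>E\<in>A. ends E \<subseteq> N \<and> card (ends E) = 2"
  using is_net unfolding is_net_def by (elim conjE) assumption

lemma nodes_connected: "connected_on (node_adj A ends) N"
  using is_net unfolding is_net_def by (elim conjE) assumption

lemma arcs_disjoint: "\<forall>E\<in>A. \<forall>F\<in>A. E \<noteq> F \<longrightarrow> E \<inter> F = {}"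
  using is_net unfolding is_net_def by (elim conjE) assumption

lemma arcs_cover: "\<Union>A = X"
  using is_net unfolding is_net_def by (elim conjE) assumption

lemma card_leaf_nodes: "card (leaf_nodes N A ends) = 3"
  using is_net unfolding is_net_def by (elim conjE) assumption

lemma leaf_nodes_leaves: "\<forall>V\<in>leaf_nodes N A ends. \<exists>l\<in>leaves VG adj. V = {l}"
  using is_net unfolding is_net_def by (elim conjE) assumption

lemma arc_meets_node_iff: "\<forall>E\<in>A. \<forall>V\<in>N. E \<inter> V \<noteq> {} \<longleftrightarrow> V \<in> ends E"
  using is_net unfolding is_net_def by (elim conjE) assumption

lemma adj_between_arcs_iff:
  "\<forall>E\<in>A. \<forall>F\<in>A. E \<noteq> F \<longrightarrow> (\<forall>u\<in>E. \<forall>v\<in>F.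
     adj u v \<longleftrightarrow> (\<exists>V\<in>N. V \<in> ends E \<and> V \<in> ends F \<and> u \<in> V \<and> v \<in> V))"
  using is_net unfolding is_net_def by (elim conjE) assumption

lemma arc_eqI: "E \<in> A \<Longrightarrow> F \<in> A \<Longrightarrow> x \<in> E \<Longrightarrow> x \<in> F \<Longrightarrow> E = F"
  using arcs_disjoint by blast

lemma adj_arcsI:
  assumes "E \<in> A" "F \<in> A" "E \<noteq> F" "u \<in> E" "v \<in> F" "V \<in> N" "u \<in> V" "v \<in> V"
  shows "adj u v"
proof -
  have "V \<in> ends E" "V \<in> ends F" using arc_meets_node_iff assms by blast+
  then show ?thesis using adj_between_arcs_iff assms by blast
qed

lemma adj_arcsE:
  assumes "E \<in> A" "F \<in> A" "E \<noteq> F" "u \<in> E" "v \<in> F" "adj u v"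
  obtains V where "V \<in> N" "u \<in> V" "v \<in> V"
  using adj_between_arcs_iff assms by blast

lemma node_subset: "V \<in> N \<Longrightarrow> V \<subseteq> X"
  using nodes_subset_X by blast

lemma ends_subset: "E \<in> A \<Longrightarrow> ends E \<subseteq> N"
  using arc_ends by blast

lemma card_ends: "E \<in> A \<Longrightarrow> card (ends E) = 2"
  using arc_ends by blast

lemma arc_cover:
  assumes "x \<in> X"
  obtains E where "E \<in> A" "x \<in> E"
  using arcs_cover assms by blast

lemma end_nodeI: "E \<in> A \<Longrightarrow> V \<in> N \<Longrightarrow> x \<in> E \<Longrightarrow> x \<in> V \<Longrightarrow> V \<in> ends E"
  using arc_meets_node_iff by blast

lemma node_adjI: "E \<in> A \<Longrightarrow> ends E = {U, V} \<Longrightarrow> U \<noteq> V \<Longrightarrow> node_adj A ends U V"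
  unfolding node_adj_def by blast

lemma leaf_nodes_subset: "leaf_nodes N A ends \<subseteq> N"
  unfolding leaf_nodes_def by blast

lemma nodes_nonempty: "N \<noteq> {}"
  using card_leaf_nodes leaf_nodes_subset by force

lemma leaf_node_only_arc:
  assumes "V \<in> leaf_nodes N A ends" "E \<in> A" "V \<in> ends E" "F \<in> A" "V \<in> ends F"
  shows "F = E"
proof -
  have "card {F \<in> A. V \<in> ends F} = 1"
    using assms(1) by (simp add: leaf_nodes_def node_degree_def)
  then obtain E' where E': "{F \<in> A. V \<in> ends F} = {E'}" by (rule card_1_singletonE)
  have "E \<in> {E'}" "F \<in> {E'}" using assms(2-5) unfolding E'[symmetric] by simp_all
  then show ?thesis by simp
qed

lemma leaf_node_arc:
  assumes "V \<in> leaf_nodes N A ends"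
  obtains E l where "E \<in> A" "V = {l}" "l \<in> leaves VG adj" "l \<in> E" "V \<in> ends E"
proof -
  obtain l where l: "l \<in> leaves VG adj" "V = {l}"
    using leaf_nodes_leaves assms by blast
  have V: "V \<in> N" using assms leaf_nodes_subset by blast
  obtain E where E: "E \<in> A" "l \<in> E" using node_subset[OF V] l arc_cover by blast
  have "V \<in> ends E" using end_nodeI[OF E(1) V E(2)] l by blast
  then show thesis using that E l by blast
qed

lemma leaf_nodes_distinct_arcs:
  assumes V: "V \<in> leaf_nodes N A ends" and W: "W \<in> leaf_nodes N A ends" "V \<noteq> W"
    and E: "E \<in> A" "V \<in> ends E" "W \<in> ends E"
  shows False
proof -
  \<comment> \<open>E with its two leaf ends would form a whole component of the net\<close>
  have ends_E: "ends E = {V, W}" using card_two_eq_pair[OF card_ends[OF E(1)] E(2,3) W(2)] .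
  have "U \<in> {V, W}" if "(V, U) \<in> {(x, y). x \<in> N \<and> y \<in> N \<and> node_adj A ends x y}\<^sup>*" for U
    using that
  proof (induction rule: rtrancl_induct)
    case base
    show ?case by simp
  next
    case (step U U')
    then obtain F where F: "F \<in> A" "ends F = {U, U'}" unfolding node_adj_def by blast
    have "U \<in> ends F" using F(2) by simp
    then have "F = E"
      using step.IH leaf_node_only_arc[OF V E(1,2) F(1)] leaf_node_only_arc[OF W(1) E(1,3) F(1)]
      by auto
    then show ?case using F(2) ends_E by (metis insertCI)
  qed
  then have "leaf_nodes N A ends \<subseteq> {V, W}"
    using V leaf_nodes_subset nodes_connected unfolding connected_on_def by blast
  then have "card (leaf_nodes N A ends) \<le> card {V, W}" by (simp add: card_mono)
  also have "\<dots> = 2" using W(2) by simp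
  finally show False using card_leaf_nodes by simp
qed

lemma tamed_set_common_end:
  assumes "tamed_set N A S" "x \<in> S" "y \<in> S"
    and "E \<in> A" "F \<in> A" "E \<noteq> F" "x \<in> E" "y \<in> F"
  obtains V where "V \<in> ends E" "V \<in> ends F" "x \<in> V" "y \<in> V"
proof -
  have "(\<exists>G\<in>A. x \<in> G \<and> y \<in> G) \<or> (\<exists>V\<in>N. x \<in> V \<and> y \<in> V)"
    using assms(1-3) unfolding tamed_set_def by blast
  moreover have "\<not> (\<exists>G\<in>A. x \<in> G \<and> y \<in> G)"
    using arc_eqI assms(4-8) by metis
  ultimately obtain V where "V \<in> N" "x \<in> V" "y \<in> V" by blast
  then show thesis using that end_nodeI assms(4,5,7,8) by blast
qed

definition linked_at :: "'a set \<Rightarrow> 'a set \<Rightarrow> 'a set \<Rightarrow> 'a set \<Rightarrow> bool" where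
  "linked_at T V E F \<longleftrightarrow> V \<in> N \<and> E \<in> A \<and> F \<in> A \<and> E \<noteq> F \<and>
     T \<inter> E \<inter> V \<noteq> {} \<and> T \<inter> F \<inter> V \<noteq> {}"

definition linked :: "'a set \<Rightarrow> 'a set \<Rightarrow> 'a set \<Rightarrow> bool" where
  "linked T E F \<longleftrightarrow> (\<exists>V. linked_at T V E F)"

lemma linked_sym: "linked T E F \<Longrightarrow> linked T F E"
  unfolding linked_def linked_at_def by blast

lemma linked_at_end: "linked_at T V E F \<Longrightarrow> V \<in> ends E"
  unfolding linked_at_def using end_nodeI by blast

lemma linked_at_unique:
  assumes tree: "induced_tree VG adj T" and "linked_at T V E F" "linked_at T V E F'"
  shows "F = F'"
proof (rule ccontr)
  assume "F \<noteq> F'"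
  obtain t s s' where V: "V \<in> N" and arcs: "E \<in> A" "F \<in> A" "F' \<in> A" "E \<noteq> F" "E \<noteq> F'"
    and t: "t \<in> T" "t \<in> E" "t \<in> V" and s: "s \<in> T" "s \<in> F" "s \<in> V"
    and s': "s' \<in> T" "s' \<in> F'" "s' \<in> V"
    using assms(2,3) unfolding linked_at_def by blast
  have "adj t s" "adj s s'" "adj s' t"
    using adj_arcsI[OF arcs(1,2,4) t(2) s(2) V t(3) s(3)]
      adj_arcsI[OF arcs(2,3) \<open>F \<noteq> F'\<close> s(2) s'(2) V s(3) s'(3)]
      adj_arcsI[OF arcs(3,1) arcs(5)[symmetric] s'(2) t(2) V s'(3) t(3)] .
  moreover have "t \<noteq> s" "s \<noteq> s'" "s' \<noteq> t"
    using arc_eqI arcs t(2) s(2) s'(2) \<open>F \<noteq> F'\<close> by metis+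
  ultimately show False using induced_tree_no_triangle[OF tree t(1) s(1) s'(1)] by blast
qed

lemma linked_degree_le_two:
  assumes tree: "induced_tree VG adj T" and "linked T E a" "linked T E b" "linked T E c"
  shows "a = b \<or> b = c \<or> a = c"
proof -
  obtain Va Vb Vc where at: "linked_at T Va E a" "linked_at T Vb E b" "linked_at T Vc E c"
    using assms(2-4) unfolding linked_def by blast
  then have "E \<in> A" unfolding linked_at_def by blast
  then have "Va = Vb \<or> Vb = Vc \<or> Va = Vc"
    using card_two_pigeonhole[OF card_ends] linked_at_end[OF at(1)] linked_at_end[OF at(2)]
      linked_at_end[OF at(3)] by blast
  then show ?thesis using linked_at_unique[OF tree] at by metis
qed

lemma leaf_arc_linked_unique:
  assumes tree: "induced_tree VG adj T" and leaf: "{l} \<in> ends E" "l \<in> E"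
    and "linked T E a" "linked T E b"
  shows "a = b"
proof -
  obtain Va Vb where at: "linked_at T Va E a" "linked_at T Vb E b"
    using assms(4,5) unfolding linked_def by blast
  have not_leaf: "V \<noteq> {l}" if "linked_at T V E F" for V F
    using that leaf(2) arc_eqI unfolding linked_at_def by blast
  have "E \<in> A" using at(1) unfolding linked_at_def by blast
  then have "Va = Vb"
    using card_two_pigeonhole[OF card_ends] leaf(1) linked_at_end at not_leaf by metis
  then show ?thesis using linked_at_unique[OF tree] at by blast
qed

lemma adj_tamed_pair:
  assumes "u \<in> X" "v \<in> X" "adj u v"
  shows "tamed_set N A {u, v}"
proof -
  obtain E where E: "E \<in> A" "u \<in> E" using arc_cover[OF assms(1)] .
  obtain F where F: "F \<in> A" "v \<in> F" using arc_cover[OF assms(2)] .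
  have "(\<exists>G\<in>A. u \<in> G \<and> v \<in> G) \<or> (\<exists>V\<in>N. u \<in> V \<and> v \<in> V)"
  proof (cases "E = F")
    case False
    obtain V where "V \<in> N" "u \<in> V" "v \<in> V"
      using adj_arcsE[OF E(1) F(1) False E(2) F(2) assms(3)] .
    then show ?thesis by blast
  qed (use E F in blast)
  then show ?thesis using E F unfolding tamed_set_def by blast
qed

lemma tamed_pair_extends_linked_rtrancl:
  assumes "(E0, E) \<in> {(E, F). linked T E F}\<^sup>*" "tamed_set N A {u, v}"
    and "u \<in> T" "v \<in> T" "E \<in> A" "u \<in> E" "F \<in> A" "v \<in> F"
  shows "(E0, F) \<in> {(E, F). linked T E F}\<^sup>*"
proof (cases "E = F")
  case False
  have "(\<exists>G\<in>A. u \<in> G \<and> v \<in> G) \<or> (\<exists>V\<in>N. u \<in> V \<and> v \<in> V)"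
    using assms(2) unfolding tamed_set_def by blast
  moreover have "\<not> (\<exists>G\<in>A. u \<in> G \<and> v \<in> G)" using arc_eqI assms(5-8) False by metis
  ultimately obtain V where "V \<in> N" "u \<in> V" "v \<in> V" by blast
  then have "linked T E F" unfolding linked_def linked_at_def using assms(3-8) False by blast
  then show ?thesis using assms(1) by (simp add: rtrancl.rtrancl_into_rtrancl)
qed (use assms(1) in simp)

lemma tree_walk_links_arcs:
  assumes sym: "\<And>u v. adj u v \<Longrightarrow> adj v u" and tame: "taming VG adj X N A"
    and T: "T \<subseteq> VG" "connected_on adj T"
    and t: "t \<in> T" "E \<in> A" "t \<in> E" and s: "s \<in> T" "F \<in> A" "s \<in> F"
  shows "(E, F) \<in> {(E, F). linked T E F}\<^sup>*"
proof -
  define reached where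
    "reached x \<longleftrightarrow> x \<in> T \<and> (\<exists>F\<in>A. x \<in> F \<and> (E, F) \<in> {(E, F). linked T E F}\<^sup>*)" for x
  have arcs_in_X: "G \<subseteq> X" if "G \<in> A" for G using that arcs_cover by blast
  have reached_step: "reached v"
    if u: "reached u" and uv: "tamed_set N A {u, v}" and v: "v \<in> T" "v \<in> X" for u v
  proof -
    obtain G where G: "G \<in> A" "v \<in> G" using arc_cover[OF v(2)] .
    obtain H where H: "H \<in> A" "u \<in> H" "(E, H) \<in> {(E, F). linked T E F}\<^sup>*" and "u \<in> T"
      using u unfolding reached_def by blast
    then have "(E, G) \<in> {(E, F). linked T E F}\<^sup>*"
      using tamed_pair_extends_linked_rtrancl[OF H(3) uv _ v(1) H(1,2) G] by blast
    then show ?thesis unfolding reached_def using v(1) G by blast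
  qed
  \<comment> \<open>a vertex of T outside X hangs, through a connected piece Y of T - X, on a reached vertex\<close>
  have "(v \<in> X \<longrightarrow> reached v) \<and> (v \<notin> X \<longrightarrow> (\<exists>Y a. Y \<subseteq> T - X \<and> connected_on adj Y \<and>
      v \<in> Y \<and> reached a \<and> a \<in> X \<and> (\<exists>y\<in>Y. adj a y)))"
    if "(t, v) \<in> {(x, y). x \<in> T \<and> y \<in> T \<and> adj x y}\<^sup>*" for v
    using that
  proof (induction rule: rtrancl_induct)
    case base
    have "(E, E) \<in> {(E, F). linked T E F}\<^sup>*" by simp
    then have "reached t" unfolding reached_def using t by blast
    moreover have "t \<in> X" using arcs_in_X t(2,3) by blast
    ultimately show ?case by blast
  next
    case (step y z)
    then have yz: "y \<in> T" "z \<in> T" "adj y z" by auto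
    note IH = step.IH[THEN conjunct1, rule_format] step.IH[THEN conjunct2, rule_format]
    consider "y \<in> X" "z \<in> X" | "y \<in> X" "z \<notin> X" | "y \<notin> X" "z \<in> X" | "y \<notin> X" "z \<notin> X"
      by blast
    then show ?case
    proof cases
      case 1
      have "reached y" using IH(1) 1(1) .
      then have "reached z" by (rule reached_step[OF _ adj_tamed_pair[OF 1 yz(3)] yz(2) 1(2)])
      then show ?thesis using 1(2) by blast
    next
      case 2
      have "connected_on adj {z}" unfolding connected_on_def by auto
      moreover have "reached y" using IH(1) 2(1) .
      ultimately have "\<exists>Y a. Y \<subseteq> T - X \<and> connected_on adj Y \<and> z \<in> Y \<and> reached a \<and> a \<in> X \<and>
          (\<exists>y\<in>Y. adj a y)"
        using yz 2 by (intro exI[of _ "{z}"] exI[of _ y]) auto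
      then show ?thesis using 2(2) by blast
    next
      case 3
      then obtain Y a w where Y: "Y \<subseteq> T - X" "connected_on adj Y" "y \<in> Y" "reached a" "a \<in> X"
        "w \<in> Y" "adj a w" using IH(2)[OF 3(1)] by blast
      have "Y \<subseteq> VG - X" using Y(1) T(1) by blast
      then have "tamed_set N A {x \<in> X. \<exists>y\<in>Y. adj x y}"
        using tame Y(2) by (simp add: taming_def tamed_outside_def)
      moreover have "{a, z} \<subseteq> {x \<in> X. \<exists>y\<in>Y. adj x y}" using Y(3,5-7) 3(2) sym[OF yz(3)] by blast
      ultimately have "tamed_set N A {a, z}" by (rule tamed_set_subset)
      then have "reached z" by (rule reached_step[OF Y(4) _ yz(2) 3(2)])
      then show ?thesis using 3(2) by blast
    next
      case 4
      then obtain Y a where Y: "Y \<subseteq> T - X" "connected_on adj Y" "y \<in> Y" "reached a" "a \<in> X"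
        "\<exists>w\<in>Y. adj a w" using IH(2)[OF 4(1)] by blast
      have "connected_on adj (insert z Y)"
        using connected_on_insert[OF Y(2,3) yz(3) sym[OF yz(3)]] .
      moreover have "insert z Y \<subseteq> T - X" using Y(1) yz(2) 4(2) by blast
      ultimately have "\<exists>Y a. Y \<subseteq> T - X \<and> connected_on adj Y \<and> z \<in> Y \<and> reached a \<and> a \<in> X \<and>
          (\<exists>y\<in>Y. adj a y)"
        using Y(4-6) by (intro exI[of _ "insert z Y"] exI[of _ a]) auto
      then show ?thesis using 4(2) by blast
    qed
  qed
  moreover have "(t, s) \<in> {(x, y). x \<in> T \<and> y \<in> T \<and> adj x y}\<^sup>*"
    using T(2) t(1) s(1) unfolding connected_on_def by blast
  moreover have "s \<in> X" using arcs_in_X s(2,3) by blast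
  ultimately obtain F' where "F' \<in> A" "s \<in> F'" "(E, F') \<in> {(E, F). linked T E F}\<^sup>*"
    unfolding reached_def by blast
  moreover have "F' = F" using arc_eqI calculation(1,2) s(2,3) by blast
  ultimately show ?thesis by simp
qed

lemma no_sapling_if_taming:
  assumes sym: "\<And>u v. adj u v \<Longrightarrow> adj v u" and tame: "taming VG adj X N A"
  shows "\<not> sapling VG adj T"
proof
  assume "sapling VG adj T"
  then have tree: "induced_tree VG adj T" and leaves_T: "leaves VG adj \<subseteq> T"
    unfolding sapling_def by blast+
  then have T: "T \<subseteq> VG" "connected_on adj T" unfolding induced_tree_def by blast+
  obtain V1 V2 V3 where V: "leaf_nodes N A ends = {V1, V2, V3}" "V1 \<noteq> V2" "V2 \<noteq> V3" "V1 \<noteq> V3"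
    using card_leaf_nodes unfolding card_3_iff by blast
  then have L: "V1 \<in> leaf_nodes N A ends" "V2 \<in> leaf_nodes N A ends" "V3 \<in> leaf_nodes N A ends"
    by simp_all
  obtain E1 l1 where 1: "E1 \<in> A" "V1 = {l1}" "l1 \<in> leaves VG adj" "l1 \<in> E1" "V1 \<in> ends E1"
    using leaf_node_arc[OF L(1)] .
  obtain E2 l2 where 2: "E2 \<in> A" "V2 = {l2}" "l2 \<in> leaves VG adj" "l2 \<in> E2" "V2 \<in> ends E2"
    using leaf_node_arc[OF L(2)] .
  obtain E3 l3 where 3: "E3 \<in> A" "V3 = {l3}" "l3 \<in> leaves VG adj" "l3 \<in> E3" "V3 \<in> ends E3"
    using leaf_node_arc[OF L(3)] .
  have distinct: "E1 \<noteq> E2" "E1 \<noteq> E3" "E2 \<noteq> E3"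
    using leaf_nodes_distinct_arcs[OF L(1,2) V(2) 1(1,5)] leaf_nodes_distinct_arcs[OF L(1,3) V(4) 1(1,5)]
      leaf_nodes_distinct_arcs[OF L(2,3) V(3) 2(1,5)] 2(5) 3(5) by blast+
  have "l1 \<in> T" "l2 \<in> T" "l3 \<in> T" using leaves_T 1(3) 2(3) 3(3) by blast+
  then have reach: "(E1, E2) \<in> {(E, F). linked T E F}\<^sup>*" "(E1, E3) \<in> {(E, F). linked T E F}\<^sup>*"
    using tree_walk_links_arcs[OF sym tame T] 1(1,4) 2(1,4) 3(1,4) by blast+
  have pendant: "a = b" if "E \<in> {E1, E2, E3}" "linked T E a" "linked T E b" for E a b
  proof -
    have "{l1} \<in> ends E1" "{l2} \<in> ends E2" "{l3} \<in> ends E3"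
      using 1(2,5) 2(2,5) 3(2,5) by simp_all
    then have "\<exists>l. {l} \<in> ends E \<and> l \<in> E" using that(1) 1(4) 2(4) 3(4) by auto
    then obtain l where "{l} \<in> ends E" "l \<in> E" by blast
    then show ?thesis by (rule leaf_arc_linked_unique[OF tree _ _ that(2,3)])
  qed
  show False
  proof (rule max_degree_two_no_three_pendants[of "linked T" E1 E2 E3])
    show "linked T v u" if "linked T u v" for u v using linked_sym[OF that] .
    show "a = b \<or> b = c \<or> a = c" if "linked T v a" "linked T v b" "linked T v c" for v a b c
      using linked_degree_le_two[OF tree that] .
    show "a = b" if "x \<in> {E1, E2, E3}" "linked T x a" "linked T x b" for x a b
      using pendant[OF that] .
  qed (fact distinct reach)+
qed

end

locale simple_net = graph_net +
  assumes no_parallel: "no_parallel_arcs A ends"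
begin

lemma common_end_unique:
  assumes "E \<in> A" "F \<in> A" "E \<noteq> F" "V \<in> ends E" "V \<in> ends F" "W \<in> ends E" "W \<in> ends F"
  shows "V = W"
proof (rule ccontr)
  assume "V \<noteq> W"
  then have "ends E = ends F"
    using card_two_eq_pair card_ends assms by metis
  then show False using no_parallel assms(1-3) unfolding no_parallel_arcs_def by blast
qed

lemma tamed_set_in_common_end:
  assumes "tamed_set N A S" "x \<in> S" "y \<in> S"
    and "E \<in> A" "F \<in> A" "E \<noteq> F" "x \<in> E" "y \<in> F" "V \<in> ends E" "V \<in> ends F"
  shows "x \<in> V"
proof -
  obtain W where "W \<in> ends E" "W \<in> ends F" "x \<in> W"
    using tamed_set_common_end[OF assms(1-8)] by blast
  then show ?thesis using common_end_unique[OF assms(4-6,9,10)] by simp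
qed



lemma tamed_set_subset_triad:
  assumes tamed: "tamed_set N A S" and SX: "S \<subseteq> X"
    and arcs: "E \<in> A" "F \<in> A" "G \<in> A"
    and ends: "ends E = {U, V}" "ends F = {V, W}" "ends G = {W, U}"
    and nodes: "U \<noteq> V" "V \<noteq> W" "W \<noteq> U"
    and x: "x \<in> S" "x \<in> E" and y: "y \<in> S" "y \<in> F" and z: "z \<in> S" "z \<in> G"
  shows "S \<subseteq> (U \<inter> V) \<union> (V \<inter> W) \<union> (W \<inter> U)"
proof
  fix s assume s: "s \<in> S"
  then obtain K where K: "K \<in> A" "s \<in> K" using SX arc_cover by blast
  have EF: "E \<noteq> F" and FG: "F \<noteq> G" and GE: "G \<noteq> E"
    using ends nodes by (auto simp: doubleton_eq_iff)
  have meets: "ends K \<inter> ends L \<noteq> {}" if "L \<in> A" "K \<noteq> L" "t \<in> S" "t \<in> L" for L t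
    using tamed_set_common_end[OF tamed s that(3) K(1) that(1,2) K(2) that(4)] by blast
  \<comment> \<open>an arc touching all three sides of the triangle would be parallel to one of them\<close>
  have "K = E \<or> K = F \<or> K = G"
  proof (rule ccontr)
    assume other: "\<not> (K = E \<or> K = F \<or> K = G)"
    then have "ends K \<inter> {U, V} \<noteq> {}" "ends K \<inter> {V, W} \<noteq> {}" "ends K \<inter> {W, U} \<noteq> {}"
      using meets[OF arcs(1) _ x] meets[OF arcs(2) _ y] meets[OF arcs(3) _ z] ends by auto
    then have "ends K = ends E \<or> ends K = ends F \<or> ends K = ends G"
      using card_two_meets_triangle[OF card_ends[OF K(1)] nodes(1,2) nodes(3)[symmetric]] ends
      by (auto simp: insert_commute)
    then show False
      using no_parallel K(1) arcs other unfolding no_parallel_arcs_def by metis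
  qed
  moreover have "s \<in> U" "s \<in> V" if "K = E"
    using tamed_set_in_common_end[OF tamed s z(1) K(1) arcs(3) _ K(2) z(2)]
      tamed_set_in_common_end[OF tamed s y(1) K(1) arcs(2) _ K(2) y(2)] that EF GE ends by auto
  moreover have "s \<in> V" "s \<in> W" if "K = F"
    using tamed_set_in_common_end[OF tamed s x(1) K(1) arcs(1) _ K(2) x(2)]
      tamed_set_in_common_end[OF tamed s z(1) K(1) arcs(3) _ K(2) z(2)] that EF FG ends by auto
  moreover have "s \<in> W" "s \<in> U" if "K = G"
    using tamed_set_in_common_end[OF tamed s y(1) K(1) arcs(2) _ K(2) y(2)]
      tamed_set_in_common_end[OF tamed s x(1) K(1) arcs(1) _ K(2) x(2)] that FG GE ends by auto
  ultimately show "s \<in> (U \<inter> V) \<union> (V \<inter> W) \<union> (W \<inter> U)" by blast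
qed


lemma tamed_set_local:
  assumes SX: "S \<subseteq> X" and tamed: "tamed_set N A S"
  shows "local_set N A ends S"
proof (cases "(\<exists>E\<in>A. S \<subseteq> E) \<or> S = {}")
  case True
  then show ?thesis using nodes_nonempty unfolding local_set_def by blast
next
  case False
  then obtain x where x: "x \<in> S" by blast
  then obtain E where E: "E \<in> A" "x \<in> E" using SX arc_cover by blast
  obtain y where y: "y \<in> S" "y \<notin> E" using False E(1) by blast
  then obtain F where F: "F \<in> A" "y \<in> F" using SX arc_cover by blast
  have EF: "E \<noteq> F" using y F by blast
  obtain V where V: "V \<in> ends E" "V \<in> ends F" "x \<in> V" "y \<in> V"
    using tamed_set_common_end[OF tamed x y(1) E(1) F(1) EF E(2) F(2)] .
  show ?thesis
  proof (cases "S \<subseteq> V")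
    case True
    then show ?thesis using V(1) ends_subset[OF E(1)] unfolding local_set_def by blast
  next
    case False
    then obtain z where z: "z \<in> S" "z \<notin> V" by blast
    then obtain G where G: "G \<in> A" "z \<in> G" using SX arc_cover by blast
    have GE: "G \<noteq> E"
      using tamed_set_in_common_end[OF tamed z(1) y(1) _ F(1) _ _ F(2) _ V(2)] G V(1) EF z(2)
      by blast
    have GF: "G \<noteq> F"
      using tamed_set_in_common_end[OF tamed z(1) x _ E(1) _ _ E(2) _ V(1)] G V(2) EF z(2)
      by blast
    obtain U where U: "U \<in> ends E" "U \<in> ends G" "z \<in> U"
      using tamed_set_common_end[OF tamed z(1) x G(1) E(1) GE G(2) E(2)] by blast
    obtain W where W: "W \<in> ends F" "W \<in> ends G" "z \<in> W"
      using tamed_set_common_end[OF tamed z(1) y(1) G(1) F(1) GF G(2) F(2)] by blast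
    have UV: "U \<noteq> V" and VW: "V \<noteq> W" using U(3) W(3) z(2) by auto
    have WU: "W \<noteq> U"
      using common_end_unique[OF E(1) F(1) EF V(1,2) U(1)] W(1) UV by blast
    have ends: "ends E = {U, V}" "ends F = {V, W}" "ends G = {W, U}"
      by (rule card_two_eq_pair[OF card_ends[OF E(1)] U(1) V(1) UV],
          rule card_two_eq_pair[OF card_ends[OF F(1)] V(2) W(1) VW],
          rule card_two_eq_pair[OF card_ends[OF G(1)] W(2) U(2) WU])
    have "U \<in> N" "V \<in> N" "W \<in> N" using ends_subset E(1) F(1) U(1) V(1) W(1) by blast+
    moreover have "node_adj A ends U V" "node_adj A ends V W" "node_adj A ends W U"
      using node_adjI E(1) F(1) G(1) ends UV VW WU by simp_all
    ultimately have "triad N A ends ((U \<inter> V) \<union> (V \<inter> W) \<union> (W \<inter> U))"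
      unfolding triad_def by blast
    moreover have "S \<subseteq> (U \<inter> V) \<union> (V \<inter> W) \<union> (W \<inter> U)"
      using tamed_set_subset_triad[OF tamed SX E(1) F(1) G(1) ends UV VW WU x E(2) y(1) F(2) z(1) G(2)] .
    ultimately show ?thesis unfolding local_set_def by blast
  qed
qed

end

theorem lemma3p5:
  fixes VG :: "'a set" and adj :: "'a \<Rightarrow> 'a \<Rightarrow> bool"
  assumes "simple_graph VG adj"
    and "card (leaves VG adj) = 3"
  shows "((\<exists>X N A ends. is_net VG adj X N A ends \<and> taming VG adj X N A)
            \<longrightarrow> \<not> (\<exists>T. sapling VG adj T))
       \<and> (\<forall>X N A ends S. is_net VG adj X N A ends \<and> no_parallel_arcs A ends \<and>
            S \<subseteq> X \<and> tamed_set N A S \<longrightarrow> local_set N A ends S)"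
proof (intro conjI allI impI)
  have sym: "\<And>u v. adj u v \<Longrightarrow> adj v u" using assms(1) unfolding simple_graph_def by blast
  show "\<not> (\<exists>T. sapling VG adj T)"
    if taming_net: "\<exists>X N A ends. is_net VG adj X N A ends \<and> taming VG adj X N A"
  proof -
    obtain X N A ends where net: "is_net VG adj X N A ends" and tame: "taming VG adj X N A"
      using taming_net by blast
    interpret graph_net VG adj X N A ends using net by unfold_locales
    show ?thesis using no_sapling_if_taming[OF sym tame] by blast
  qed
  show "local_set N A ends S"
    if "is_net VG adj X N A ends \<and> no_parallel_arcs A ends \<and> S \<subseteq> X \<and> tamed_set N A S"
    for X N A ends S
  proof -
    interpret simple_net VG adj X N A ends using that by unfold_locales blast+
    show ?thesis using tamed_set_local that by blast
  qed
qed

end
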